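(* Let $G$ be a finitely generated group with growth function $g_G(n)$. Then $U_{W(G)}(n) \ge g_G(\lfloor n/2\rfloor)$ for all $n$.
   Context: For a finite generating set $X$ of $G$, $|g|_X$ is the length of a shortest word over $X\cup X^{-1}$ representing $g$, and $g_G(n)=|\{g\in G: |g|_X\le n\}|$ is the growth function. $W(G)=W(G,X)$ is the word problem language: the set of words over $X\cup X^{-1}$ representing the identity of $G$. A finite set $S$ of strings is uniformly $n$-dissimilar for a language $\mathtt{L}$ if for each $w\in S$ there is a string $v$ with $|wv|\le n$, $wv\in\mathtt{L}$, and for every $w'\in S$, $w'\neq w$, $|w'v|\le n$ and $w'v\notin\mathtt{L}$. $U_{\mathtt{L}}(n)$ is the maximum cardinality of a uniformly $n$-dissimilar set for $\mathtt{L}$. *)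

theory Defs
  imports "HOL-Algebra.Algebra"
begin

text \<open>Letters of the alphabet X \<union> X^-1: a letter (x, False) stands for the generator x,
  a letter (x, True) for its formal inverse x^-1.\<close>

definition alphabet :: "'a set \<Rightarrow> ('a * bool) set" where
  "alphabet Y = Sigma Y (\<lambda>_. (UNIV :: bool set))"

definition letter_val :: "('a, 'b) monoid_scheme \<Rightarrow> 'a * bool \<Rightarrow> 'a" where
  "letter_val G l = (if snd l then m_inv G (fst l) else fst l)"

fun word_eval :: "('a, 'b) monoid_scheme \<Rightarrow> ('a * bool) list \<Rightarrow> 'a" where
  "word_eval G [] = one G"
| "word_eval G (l # w) = monoid.mult G (letter_val G l) (word_eval G w)"

definition word_length :: "('a, 'b) monoid_scheme \<Rightarrow> 'a set \<Rightarrow> 'a \<Rightarrow> nat" where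
  "word_length G Y g = (LEAST k. \<exists>w \<in> lists (alphabet Y). length w = k \<and> word_eval G w = g)"

definition growth :: "('a, 'b) monoid_scheme \<Rightarrow> 'a set \<Rightarrow> nat \<Rightarrow> nat" where
  "growth G Y n = card {g \<in> carrier G. word_length G Y g \<le> n}"

definition word_problem :: "('a, 'b) monoid_scheme \<Rightarrow> 'a set \<Rightarrow> ('a * bool) list set" where
  "word_problem G Y = {w \<in> lists (alphabet Y). word_eval G w = one G}"

definition unif_dissimilar :: "'c set \<Rightarrow> 'c list set \<Rightarrow> nat \<Rightarrow> 'c list set \<Rightarrow> bool" where
  "unif_dissimilar \<Sigma> L n S \<longleftrightarrow> finite S \<and> S \<subseteq> lists \<Sigma> \<and>
     (\<forall>w \<in> S. \<exists>v \<in> lists \<Sigma>. length (w @ v) \<le> n \<and> w @ v \<in> L \<and>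
        (\<forall>w' \<in> S. w' \<noteq> w \<longrightarrow> length (w' @ v) \<le> n \<and> w' @ v \<notin> L))"

definition U_fun :: "'c set \<Rightarrow> 'c list set \<Rightarrow> nat \<Rightarrow> nat" where
  "U_fun \<Sigma> L n = Max {card S | S. unif_dissimilar \<Sigma> L n S}"

end

theory Submission
  imports Defs
begin

text \<open>Choose for every element of the ball of radius \<open>n div 2\<close> a geodesic word \<open>w\<^sub>g\<close>. The formal
  inverse \<open>w\<^sub>g\<^sup>-\<^sup>1\<close> completes \<open>w\<^sub>g\<close> to a word of length at most \<open>n\<close> representing the identity,
  whereas for \<open>h \<noteq> g\<close> the word \<open>w\<^sub>h w\<^sub>g\<^sup>-\<^sup>1\<close> represents \<open>h g\<^sup>-\<^sup>1 \<noteq> 1\<close>. So the geodesic words form a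
  uniformly \<open>n\<close>-dissimilar set for the word problem, of the same size as the ball.\<close>

definition inv_word :: "('a \<times> bool) list \<Rightarrow> ('a \<times> bool) list" where
  "inv_word w = rev (map (\<lambda>(x, b). (x, \<not> b)) w)"

lemma length_inv_word [simp]: "length (inv_word w) = length w"
  by (simp add: inv_word_def)

lemma inv_word_in_lists: "w \<in> lists (alphabet Y) \<Longrightarrow> inv_word w \<in> lists (alphabet Y)"
  by (auto simp: inv_word_def alphabet_def)

lemma inv_word_Cons: "inv_word ((x, b) # w) = inv_word w @ [(x, \<not> b)]"
  by (simp add: inv_word_def)

definition geodesic :: "('a, 'b) monoid_scheme \<Rightarrow> 'a set \<Rightarrow> 'a \<Rightarrow> ('a \<times> bool) list" where
  "geodesic G Y g =
     (SOME w. w \<in> lists (alphabet Y) \<and> length w = word_length G Y g \<and> word_eval G w = g)"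

context group
begin

lemma letter_val_closed:
  "l \<in> alphabet Y \<Longrightarrow> Y \<subseteq> carrier G \<Longrightarrow> letter_val G l \<in> carrier G"
  by (auto simp: letter_val_def alphabet_def)

lemma word_eval_closed:
  "w \<in> lists (alphabet Y) \<Longrightarrow> Y \<subseteq> carrier G \<Longrightarrow> word_eval G w \<in> carrier G"
  by (induction w) (auto intro: letter_val_closed)

lemma word_eval_append:
  assumes "u \<in> lists (alphabet Y)" "v \<in> lists (alphabet Y)" "Y \<subseteq> carrier G"
  shows "word_eval G (u @ v) = word_eval G u \<otimes> word_eval G v"
  using assms(1)
proof (induction u)
  case Nil
  then show ?case using word_eval_closed[OF assms(2,3)] by simp
next
  case (Cons l u)
  then show ?case
    using m_assoc letter_val_closed word_eval_closed assms(2,3) by auto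
qed

lemma word_eval_inv_word:
  assumes "w \<in> lists (alphabet Y)" "Y \<subseteq> carrier G"
  shows "word_eval G (inv_word w) = inv (word_eval G w)"
  using assms(1)
proof (induction w)
  case Nil
  then show ?case by (simp add: inv_word_def)
next
  case (Cons l w)
  obtain x b where l: "l = (x, b)" by (cases l)
  have x: "x \<in> Y" using Cons.hyps(1) by (simp add: l alphabet_def)
  have x_closed: "x \<in> carrier G" using x assms(2) by auto
  have flip: "[(x, \<not> b)] \<in> lists (alphabet Y)" using x by (simp add: alphabet_def)
  have "word_eval G (inv_word (l # w)) = inv (word_eval G w) \<otimes> inv (letter_val G l)"
    using word_eval_append[OF inv_word_in_lists[OF Cons.hyps(2)] flip assms(2)] Cons.IH x_closed
    by (simp add: l inv_word_Cons letter_val_def)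
  also have "\<dots> = inv (word_eval G (l # w))"
    using inv_mult_group letter_val_closed word_eval_closed Cons.hyps assms(2) by simp
  finally show ?case .
qed

lemma exists_word_eval:
  assumes "g \<in> generate G Y" "Y \<subseteq> carrier G"
  shows "\<exists>w \<in> lists (alphabet Y). word_eval G w = g"
  using assms(1)
proof (induction rule: generate.induct)
  case one
  show ?case by (intro bexI[of _ "[]"]) auto
next
  case (incl h)
  then show ?case using assms(2)
    by (intro bexI[of _ "[(h, False)]"]) (auto simp: letter_val_def alphabet_def)
next
  case (inv h)
  then show ?case using assms(2)
    by (intro bexI[of _ "[(h, True)]"]) (auto simp: letter_val_def alphabet_def)
next
  case (eng h1 h2)
  then obtain u v where "u \<in> lists (alphabet Y)" "v \<in> lists (alphabet Y)"
    "word_eval G u = h1" "word_eval G v = h2" by blast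
  then show ?case using word_eval_append assms(2) by (intro bexI[of _ "u @ v"]) auto
qed

lemma geodesic:
  assumes "g \<in> generate G Y" "Y \<subseteq> carrier G"
  shows "geodesic G Y g \<in> lists (alphabet Y)"
    and "length (geodesic G Y g) = word_length G Y g"
    and "word_eval G (geodesic G Y g) = g"
proof -
  have "\<exists>k. \<exists>w \<in> lists (alphabet Y). length w = k \<and> word_eval G w = g"
    using exists_word_eval[OF assms] by blast
  then have "\<exists>w \<in> lists (alphabet Y). length w = word_length G Y g \<and> word_eval G w = g"
    unfolding word_length_def by (rule LeastI_ex)
  then have "\<exists>w. w \<in> lists (alphabet Y) \<and> length w = word_length G Y g \<and> word_eval G w = g"
    by blast
  from someI_ex[OF this] show "geodesic G Y g \<in> lists (alphabet Y)"
    and "length (geodesic G Y g) = word_length G Y g"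
    and "word_eval G (geodesic G Y g) = g"
    unfolding geodesic_def by blast+
qed

lemma inj_on_geodesic:
  "B \<subseteq> generate G Y \<Longrightarrow> Y \<subseteq> carrier G \<Longrightarrow> inj_on (geodesic G Y) B"
  by (rule inj_on_inverseI[of _ "word_eval G"]) (auto intro: geodesic(3))

lemma append_inv_word_in_word_problem_iff:
  assumes "u \<in> lists (alphabet Y)" "w \<in> lists (alphabet Y)" "Y \<subseteq> carrier G"
  shows "u @ inv_word w \<in> word_problem G Y \<longleftrightarrow> word_eval G u = word_eval G w"
proof -
  have "word_eval G (u @ inv_word w) = word_eval G u \<otimes> inv (word_eval G w)"
    using word_eval_append[OF assms(1) inv_word_in_lists[OF assms(2)] assms(3)]
      word_eval_inv_word[OF assms(2,3)] by simp
  then show ?thesis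
    using assms(1) inv_word_in_lists[OF assms(2)] word_eval_closed[OF assms(1,3)]
      word_eval_closed[OF assms(2,3)]
    by (simp add: word_problem_def inv_solve_right')
qed

lemma unif_dissimilar_geodesics:
  assumes "finite Y" "Y \<subseteq> carrier G"
    and B: "B \<subseteq> generate G Y" "\<And>g. g \<in> B \<Longrightarrow> word_length G Y g \<le> n div 2"
  shows "unif_dissimilar (alphabet Y) (word_problem G Y) n (geodesic G Y ` B)"
proof -
  let ?S = "geodesic G Y ` B"
  have word: "w \<in> lists (alphabet Y)" and short: "length w \<le> n div 2" if "w \<in> ?S" for w
  proof -
    from that obtain g where "g \<in> B" "w = geodesic G Y g" by blast
    with geodesic[OF _ assms(2)] B show "w \<in> lists (alphabet Y)" "length w \<le> n div 2" by auto
  qed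
  have eval_inj: "inj_on (word_eval G) ?S"
    using geodesic(3)[OF subsetD[OF B(1)] assms(2)] by (intro inj_onI) auto
  have "?S \<subseteq> {w. set w \<subseteq> alphabet Y \<and> length w \<le> n}"
    using word short by fastforce
  moreover have "finite {w. set w \<subseteq> alphabet Y \<and> length w \<le> n}"
    using assms(1) by (intro finite_lists_length_le) (simp add: alphabet_def)
  ultimately have "finite ?S" by (rule finite_subset)
  moreover have "?S \<subseteq> lists (alphabet Y)" using word by blast
  moreover have "\<exists>v \<in> lists (alphabet Y). length (w @ v) \<le> n \<and> w @ v \<in> word_problem G Y
      \<and> (\<forall>w' \<in> ?S. w' \<noteq> w \<longrightarrow> length (w' @ v) \<le> n \<and> w' @ v \<notin> word_problem G Y)"
    if "w \<in> ?S" for w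
  proof (intro bexI[of _ "inv_word w"] conjI ballI impI)
    show "inv_word w \<in> lists (alphabet Y)" using word[OF that] by (rule inv_word_in_lists)
    show "length (w @ inv_word w) \<le> n" using short[OF that] by simp
    show "w @ inv_word w \<in> word_problem G Y"
      using word[OF that] assms(2) by (simp add: append_inv_word_in_word_problem_iff)
    fix w' assume "w' \<in> ?S" "w' \<noteq> w"
    show "length (w' @ inv_word w) \<le> n" using short[OF that] short[OF \<open>w' \<in> ?S\<close>] by simp
    have "word_eval G w' \<noteq> word_eval G w"
      using inj_on_eq_iff[OF eval_inj \<open>w' \<in> ?S\<close> that] \<open>w' \<noteq> w\<close> by simp
    then show "w' @ inv_word w \<notin> word_problem G Y"
      using word[OF that] word[OF \<open>w' \<in> ?S\<close>] assms(2)
      by (simp add: append_inv_word_in_word_problem_iff)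
  qed
  ultimately show ?thesis
    unfolding unif_dissimilar_def by blast
qed

end

lemma card_le_U_fun:
  assumes "finite \<Sigma>" "unif_dissimilar \<Sigma> L n S"
  shows "card S \<le> U_fun \<Sigma> L n"
proof -
  define W where "W = {w. set w \<subseteq> \<Sigma> \<and> length w \<le> n}"
  have card_bound: "card S' \<le> card W" if S': "unif_dissimilar \<Sigma> L n S'" for S'
  proof (rule card_mono)
    show "finite W" unfolding W_def using assms(1) by (rule finite_lists_length_le)
    show "S' \<subseteq> W"
    proof
      fix w assume "w \<in> S'"
      have "w \<in> lists \<Sigma>" using S' \<open>w \<in> S'\<close> by (auto simp: unif_dissimilar_def)
      moreover obtain v where "length (w @ v) \<le> n"
        using S' \<open>w \<in> S'\<close> unfolding unif_dissimilar_def by blast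
      ultimately show "w \<in> W" by (auto simp: W_def)
    qed
  qed
  have "finite {card S' | S'. unif_dissimilar \<Sigma> L n S'}"
    by (rule finite_subset[of _ "{..card W}"]) (auto dest: card_bound)
  then show ?thesis unfolding U_fun_def using assms(2) by (intro Max_ge) auto
qed

theorem lemma4p3:
  fixes G :: "('a, 'b) monoid_scheme" and Y :: "'a set" and n :: nat
  assumes "group G"
    and "finite Y" and "Y \<subseteq> carrier G" and "generate G Y = carrier G"
  shows "U_fun (alphabet Y) (word_problem G Y) n \<ge> growth G Y (n div 2)"
proof -
  interpret group G by fact
  define B where "B = {g \<in> carrier G. word_length G Y g \<le> n div 2}"
  have B_generated: "B \<subseteq> generate G Y" using assms(4) by (auto simp: B_def)
  have "growth G Y (n div 2) = card (geodesic G Y ` B)"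
    using card_image[OF inj_on_geodesic[OF B_generated assms(3)]] by (simp add: growth_def B_def)
  also have "\<dots> \<le> U_fun (alphabet Y) (word_problem G Y) n"
    using assms(2) B_generated
    by (intro card_le_U_fun unif_dissimilar_geodesics assms(3)) (auto simp: alphabet_def B_def)
  finally show ?thesis .
qed

end
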